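(* With the setup in the context, let $X\subseteq E\setminus B$, $\mathbf{M}\in A^X$, $\mathbf{w}\in D_{X,\mathbf{M}}$, $Y\subseteq E$ and $\mathbf{t}=\mathbf{w}_Y$. Then $\left|\{\mathbf{m}\in A^{E\setminus B}:\ \Omega_{\mathbf{t},Y,\mathbf{M}}(\mathbf{m})\neq\emptyset\}\right|=|A|^{\,n-k-|X|-\rho_X(Y)}.$
   Context: An almost affine code over a finite alphabet $A$ of length $n$ and dimension $k$ is a subset $C\subseteq A^n$ with $|C|=|A|^k$ such that for every $X\subseteq E=\{1,\dots,n\}$, $\log_{|A|}|C_X|$ is a nonnegative integer ($C_X$ = projection onto coordinates $X$); its associated matroid $M_C$ has rank function $r(X)=\log_{|A|}|C_X|$. Setup: $C$ is an almost affine code of length $n$ and dimension $k$ over $A$ with matroid rank function $r$; $B\subseteq E$ is a basis of $M_C$; $\varphi:A\times A\to A$ is such that for every $y\in A$ both $\varphi(y,\cdot)$ and $\varphi(\cdot,y)$ are bijections. For $\mathbf{m}\in A^{E\setminus B}$, $\Phi_{\mathbf{m}}(\mathbf{w})_i=\mathbf{w}_i$ for $i\in B$ and $=\varphi(\mathbf{w}_i,\mathbf{m}_i)$ for $i\in E\setminus B$, and $C_{\mathbf{m}}=\Phi_{\mathbf{m}}(C)$ (an almost affine code with the same matroid $M_C$; the $C_{\mathbf{m}}$ partition $A^E$). For $X\subseteq E\setminus B$, $\mathbf{M}\in A^X$: $D_{X,\mathbf{M}}=\bigcup_{\mathbf{m}_X=\mathbf{M}}C_{\mathbf{m}}$, an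 almost affine code with rank function $r_{D}(Y)=|Y\setminus(B\cup X)|+r(Y\cap(B\cup X))$, and $\rho_X(Y)=r_D(Y)-r(Y)$. For $\mathbf{t}\in A^Y$ and $\mathbf{m}\in A^{E\setminus B}$: $\Omega_{\mathbf{t},Y,\mathbf{M}}(\mathbf{m})=\emptyset$ if $\mathbf{m}_X\neq\mathbf{M}$, and $\Omega_{\mathbf{t},Y,\mathbf{M}}(\mathbf{m})=\{\mathbf{w}\in C_{\mathbf{m}}:\mathbf{w}_Y=\mathbf{t}\}$ otherwise. *)

theory Defs
  imports Main "HOL-Library.FuncSet"
begin

text \<open>Words of length n over alphabet A are functions in PiE {1..n} (\<lambda>_. A).
  Projection onto coordinates X is restriction.\<close>

definition proj :: "(nat \<Rightarrow> 'a) set \<Rightarrow> nat set \<Rightarrow> (nat \<Rightarrow> 'a) set" where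
  "proj C X = (\<lambda>w. restrict w X) ` C"

definition almost_affine :: "'a set \<Rightarrow> nat \<Rightarrow> nat \<Rightarrow> (nat \<Rightarrow> 'a) set \<Rightarrow> bool" where
  "almost_affine A n k C \<longleftrightarrow>
     C \<subseteq> PiE {1..n} (\<lambda>_. A) \<and> card C = card A ^ k \<and>
     (\<forall>X. X \<subseteq> {1..n} \<longrightarrow> (\<exists>r::nat. card (proj C X) = card A ^ r))"

definition aa_rank :: "'a set \<Rightarrow> (nat \<Rightarrow> 'a) set \<Rightarrow> nat set \<Rightarrow> nat" where
  "aa_rank A C X = (THE r. card (proj C X) = card A ^ r)"

definition mat_indep :: "'a set \<Rightarrow> (nat \<Rightarrow> 'a) set \<Rightarrow> nat set \<Rightarrow> bool" where
  "mat_indep A C I \<longleftrightarrow> aa_rank A C I = card I"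

definition mat_basis :: "'a set \<Rightarrow> nat \<Rightarrow> (nat \<Rightarrow> 'a) set \<Rightarrow> nat set \<Rightarrow> bool" where
  "mat_basis A n C B \<longleftrightarrow> B \<subseteq> {1..n} \<and> mat_indep A C B \<and>
     (\<forall>B'. B \<subseteq> B' \<and> B' \<subseteq> {1..n} \<and> mat_indep A C B' \<longrightarrow> B' = B)"

definition Phi :: "('a \<Rightarrow> 'a \<Rightarrow> 'a) \<Rightarrow> nat \<Rightarrow> nat set \<Rightarrow> (nat \<Rightarrow> 'a) \<Rightarrow> (nat \<Rightarrow> 'a) \<Rightarrow> (nat \<Rightarrow> 'a)" where
  "Phi \<phi> n B m w = restrict (\<lambda>i. if i \<in> B then w i else \<phi> (w i) (m i)) {1..n}"

definition Cm :: "('a \<Rightarrow> 'a \<Rightarrow> 'a) \<Rightarrow> nat \<Rightarrow> nat set \<Rightarrow> (nat \<Rightarrow> 'a) set \<Rightarrow> (nat \<Rightarrow> 'a) \<Rightarrow> (nat \<Rightarrow> 'a) set" where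
  "Cm \<phi> n B C m = Phi \<phi> n B m ` C"

definition Dcode :: "'a set \<Rightarrow> ('a \<Rightarrow> 'a \<Rightarrow> 'a) \<Rightarrow> nat \<Rightarrow> nat set \<Rightarrow> (nat \<Rightarrow> 'a) set
    \<Rightarrow> nat set \<Rightarrow> (nat \<Rightarrow> 'a) \<Rightarrow> (nat \<Rightarrow> 'a) set" where
  "Dcode A \<phi> n B C X M =
     (\<Union>m \<in> {m \<in> PiE ({1..n} - B) (\<lambda>_. A). restrict m X = M}. Cm \<phi> n B C m)"

definition rho :: "'a set \<Rightarrow> ('a \<Rightarrow> 'a \<Rightarrow> 'a) \<Rightarrow> nat \<Rightarrow> nat set \<Rightarrow> (nat \<Rightarrow> 'a) set
    \<Rightarrow> nat set \<Rightarrow> (nat \<Rightarrow> 'a) \<Rightarrow> nat set \<Rightarrow> nat" where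
  "rho A \<phi> n B C X M Y = aa_rank A (Dcode A \<phi> n B C X M) Y - aa_rank A C Y"

definition Omega :: "('a \<Rightarrow> 'a \<Rightarrow> 'a) \<Rightarrow> nat \<Rightarrow> nat set \<Rightarrow> (nat \<Rightarrow> 'a) set
    \<Rightarrow> (nat \<Rightarrow> 'a) \<Rightarrow> nat set \<Rightarrow> nat set \<Rightarrow> (nat \<Rightarrow> 'a) \<Rightarrow> (nat \<Rightarrow> 'a) \<Rightarrow> (nat \<Rightarrow> 'a) set" where
  "Omega \<phi> n B C t Y X M m =
     (if restrict m X \<noteq> M then {} else {w \<in> Cm \<phi> n B C m. restrict w Y = t})"

end

theory Submission
  imports Defs
begin

text \<open>
  Write \<open>w = \<Phi>\<^bsub>m0\<^esub>(c0)\<close> and split \<open>Y\<close> into \<open>Z = Y \<inter> (B \<union> X)\<close> and \<open>Y' = Y - (B \<union> X)\<close>.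
  A message \<open>m\<close> with \<open>m\<^sub>X = M\<close> has \<open>\<Omega>(m) \<noteq> {}\<close> iff some \<open>c \<in> C\<close> agrees with \<open>c0\<close> on \<open>Z\<close>
  and \<open>\<phi>(c\<^sub>i, m\<^sub>i) = w\<^sub>i\<close> for all \<open>i \<in> Y'\<close>.  Since \<open>\<phi>\<close> is a Latin square, this leaves \<open>m\<close>
  free outside \<open>X \<union> Y'\<close> and lets \<open>m\<^bsub>Y'\<^esub>\<close> range bijectively over the fiber of \<open>C\<^sub>Y \<rightarrow> C\<^sub>Z\<close>
  above \<open>(c0)\<^sub>Z\<close>, which by the matroid structure of \<open>C\<close> has \<open>|A|\<^bsup>r(Y) - r(Z)\<^esup>\<close> elements.
  The same decomposition gives \<open>r\<^sub>D(Y) = |Y'| + r(Z)\<close>, and the exponents match.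
\<close>

lemma card_PiE_restrict_in:
  assumes "finite K" "I \<subseteq> K" "S \<subseteq> PiE I (\<lambda>_. A)"
  shows "card {f \<in> PiE K (\<lambda>_. A). restrict f I \<in> S} = card S * card A ^ card (K - I)"
proof -
  let ?merge = "\<lambda>(s, h). (\<lambda>i. if i \<in> I then s i else h i)"
  have eq: "{f \<in> PiE K (\<lambda>_. A). restrict f I \<in> S} = ?merge ` (S \<times> PiE (K - I) (\<lambda>_. A))"
  proof (intro equalityI subsetI)
    fix f assume f: "f \<in> {f \<in> PiE K (\<lambda>_. A). restrict f I \<in> S}"
    then have "f = ?merge (restrict f I, restrict f (K - I))"
      using assms(2) by (auto simp: fun_eq_iff PiE_def extensional_def)
    moreover have "(restrict f I, restrict f (K - I)) \<in> S \<times> PiE (K - I) (\<lambda>_. A)"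
      using f by auto
    ultimately show "f \<in> ?merge ` (S \<times> PiE (K - I) (\<lambda>_. A))" by blast
  next
    fix f assume "f \<in> ?merge ` (S \<times> PiE (K - I) (\<lambda>_. A))"
    then obtain s h where sh: "s \<in> S" "h \<in> PiE (K - I) (\<lambda>_. A)" and f: "f = ?merge (s, h)" by auto
    have s: "s \<in> PiE I (\<lambda>_. A)" using sh assms(3) by auto
    have "restrict f I = s" using s f by (auto simp: fun_eq_iff PiE_def extensional_def)
    moreover have "f \<in> PiE K (\<lambda>_. A)" using s sh f assms(2)
      by (auto simp: PiE_def extensional_def Pi_def)
    ultimately show "f \<in> {f \<in> PiE K (\<lambda>_. A). restrict f I \<in> S}" using sh by auto
  qed
  have "inj_on ?merge (S \<times> PiE (K - I) (\<lambda>_. A))"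
  proof (rule inj_onI)
    fix p p' assume pp: "p \<in> S \<times> PiE (K - I) (\<lambda>_. A)" "p' \<in> S \<times> PiE (K - I) (\<lambda>_. A)"
      and e: "?merge p = ?merge p'"
    obtain s h s' h' where p: "p = (s, h)" "p' = (s', h')" by (cases p, cases p')
    have ext: "s \<in> extensional I" "s' \<in> extensional I"
      "h \<in> extensional (K - I)" "h' \<in> extensional (K - I)"
      using pp assms(3) p by (auto simp: PiE_def)
    have "s i = s' i \<and> h i = h' i" for i
      using fun_cong[OF e, of i] ext by (cases "i \<in> I") (auto simp: p extensional_def)
    then show "p = p'" by (simp add: p fun_eq_iff)
  qed
  then show ?thesis
    unfolding eq by (simp add: card_image card_cartesian_product card_PiE[OF finite_Diff[OF assms(1)]])
qed

lemma proj_restrict_image: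
  assumes "Z \<subseteq> Y"
  shows "proj C Z = (\<lambda>y. restrict y Z) ` proj C Y"
proof -
  have "Y \<inter> Z = Z" using assms by blast
  then show ?thesis by (simp add: proj_def image_image)
qed

lemma proj_subset_PiE:
  assumes "C \<subseteq> PiE E (\<lambda>_. A)" "Y \<subseteq> E"
  shows "proj C Y \<subseteq> PiE Y (\<lambda>_. A)"
  using assms by (fastforce simp: proj_def PiE_iff)

lemma card_proj_le:
  assumes "finite A" "C \<subseteq> PiE E (\<lambda>_. A)" "Z \<subseteq> Y" "Y \<subseteq> E" "finite Y"
  shows "card (proj C Y) \<le> card (proj C Z) * card A ^ card (Y - Z)"
proof -
  let ?P = "{f \<in> PiE Y (\<lambda>_. A). restrict f Z \<in> proj C Z}"
  have "proj C Y \<subseteq> ?P"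
    using proj_subset_PiE[OF assms(2,4)] proj_restrict_image[OF assms(3), of C] by auto
  moreover have "finite ?P" using assms(1,5) by (simp add: finite_PiE)
  ultimately have "card (proj C Y) \<le> card ?P" by (rule card_mono[rotated])
  also have "card ?P = card (proj C Z) * card A ^ card (Y - Z)"
    using assms proj_subset_PiE[OF assms(2), of Z] by (intro card_PiE_restrict_in) auto
  finally show ?thesis .
qed

lemma Phi_apply: "i \<in> {1..n} \<Longrightarrow> Phi \<phi> n B m c i = (if i \<in> B then c i else \<phi> (c i) (m i))"
  by (simp add: Phi_def)

lemma restrict_Phi_cong:
  assumes "\<forall>i \<in> Z - B. m i = m' i" "\<forall>i \<in> Z. c i = c' i"
  shows "restrict (Phi \<phi> n B m c) Z = restrict (Phi \<phi> n B m' c') Z"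
  using assms by (auto simp: Phi_def fun_eq_iff)

locale almost_affine_code =
  fixes A :: "'a set" and n k :: nat and C :: "(nat \<Rightarrow> 'a) set"
  assumes finite_alphabet: "finite A" and card_alphabet: "card A \<ge> 2"
    and almost_affine: "almost_affine A n k C"
begin

definition indep :: "nat set \<Rightarrow> bool" where
  "indep I \<longleftrightarrow> card (proj C I) = card A ^ card I"

lemma code_subset: "C \<subseteq> PiE {1..n} (\<lambda>_. A)"
  using almost_affine by (simp add: almost_affine_def)

lemma code_val_in: "c \<in> C \<Longrightarrow> i \<in> {1..n} \<Longrightarrow> c i \<in> A"
  using code_subset by (auto simp: PiE_iff)

lemma alphabet_nonempty: "A \<noteq> {}"
  using card_alphabet by auto

lemma card_code: "card C = card A ^ k"
  using almost_affine by (simp add: almost_affine_def)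

lemma finite_proj: "finite (proj C X)"
proof -
  have "card C > 0" using card_code card_alphabet by simp
  then show ?thesis unfolding proj_def by (simp add: card_ge_0_finite)
qed

lemma power_alphabet_inject: "card A ^ a = card A ^ b \<Longrightarrow> a = b"
  using card_alphabet by simp

lemma power_alphabet_le_iff: "card A ^ a \<le> card A ^ b \<longleftrightarrow> a \<le> b"
  using card_alphabet by simp

lemma aa_rank_eqI: "card (proj D Y) = card A ^ r \<Longrightarrow> aa_rank A D Y = r"
  unfolding aa_rank_def by (rule the_equality) (auto dest: power_alphabet_inject)

lemma card_proj_eq_power_rank:
  assumes "X \<subseteq> {1..n}"
  shows "card (proj C X) = card A ^ aa_rank A C X"
proof -
  obtain r where r: "card (proj C X) = card A ^ r"
    using almost_affine assms by (auto simp: almost_affine_def)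
  then show ?thesis using aa_rank_eqI[OF r] by simp
qed

lemma mat_indep_iff_indep: "I \<subseteq> {1..n} \<Longrightarrow> mat_indep A C I \<longleftrightarrow> indep I"
  unfolding mat_indep_def indep_def by (auto simp: card_proj_eq_power_rank dest: power_alphabet_inject)

lemma aa_rank_mono:
  assumes "Z \<subseteq> Y" "Y \<subseteq> {1..n}"
  shows "aa_rank A C Z \<le> aa_rank A C Y"
proof -
  have "card (proj C Z) \<le> card (proj C Y)"
    unfolding proj_restrict_image[OF assms(1)] by (rule card_image_le[OF finite_proj])
  then show ?thesis
    using assms by (simp add: card_proj_eq_power_rank power_alphabet_le_iff)
qed

lemma aa_rank_le_add_card:
  assumes "Z \<subseteq> Y" "Y \<subseteq> {1..n}"
  shows "aa_rank A C Y \<le> aa_rank A C Z + card (Y - Z)"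
proof -
  have "card (proj C Y) \<le> card (proj C Z) * card A ^ card (Y - Z)"
    using assms finite_alphabet code_subset finite_subset[OF assms(2)] by (intro card_proj_le) auto
  then show ?thesis
    using assms by (simp add: card_proj_eq_power_rank power_add[symmetric] power_alphabet_le_iff)
qed

lemma card_proj_insert:
  assumes "I \<subseteq> {1..n}" "j \<in> {1..n}" "j \<notin> I"
  shows "card (proj C (insert j I)) = card (proj C I)
    \<or> card (proj C (insert j I)) = card A * card (proj C I)"
proof -
  have jI: "insert j I \<subseteq> {1..n}" using assms by auto
  define a b where "a = aa_rank A C I" and "b = aa_rank A C (insert j I)"
  have "a \<le> b" using aa_rank_mono[OF _ jI] by (auto simp: a_def b_def)
  moreover have "insert j I - I = {j}" using assms(3) by auto
  then have "b \<le> a + 1"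
    using aa_rank_le_add_card[OF _ jI, of I] by (auto simp: a_def b_def)
  ultimately have "b = a \<or> b = Suc a" by linarith
  then show ?thesis
    using card_proj_eq_power_rank[OF assms(1)] card_proj_eq_power_rank[OF jI]
    by (auto simp: a_def b_def)
qed

lemma coordinate_determined:
  assumes "I \<subseteq> {1..n}" "j \<in> {1..n}" "j \<notin> I" "card (proj C (insert j I)) = card (proj C I)"
    and "c \<in> C" "c' \<in> C" "restrict c I = restrict c' I"
  shows "c j = c' j"
proof -
  have pr: "proj C I = (\<lambda>y. restrict y I) ` proj C (insert j I)"
    by (rule proj_restrict_image) auto
  have "inj_on (\<lambda>y. restrict y I) (proj C (insert j I))"
    using pr assms(4) by (intro eq_card_imp_inj_on[OF finite_proj]) simp
  moreover have "restrict c (insert j I) \<in> proj C (insert j I)"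
    "restrict c' (insert j I) \<in> proj C (insert j I)"
    using assms by (auto simp: proj_def)
  moreover have "insert j I \<inter> I = I" by blast
  then have "restrict (restrict c (insert j I)) I = restrict (restrict c' (insert j I)) I"
    using assms(7) by simp
  ultimately have "restrict c (insert j I) = restrict c' (insert j I)" by (meson inj_onD)
  then show ?thesis by (metis insertI1 restrict_apply')
qed

lemma maximal_indep_determines:
  assumes "I \<subseteq> Z" "Z \<subseteq> {1..n}" "indep I" "\<forall>j \<in> Z - I. \<not> indep (insert j I)"
    and "c \<in> C" "c' \<in> C" "restrict c I = restrict c' I"
  shows "restrict c Z = restrict c' Z"
proof
  fix j
  show "restrict c Z j = restrict c' Z j"
  proof (cases "j \<in> Z - I")
    case True
    have I: "I \<subseteq> {1..n}" "j \<in> {1..n}" "j \<notin> I" using assms True by auto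
    have "card (insert j I) = Suc (card I)"
      using True finite_subset[OF subset_trans[OF assms(1,2)]] by simp
    moreover have "\<not> indep (insert j I)" using assms(4) True by blast
    ultimately have "card (proj C (insert j I)) \<noteq> card A * card (proj C I)"
      using assms(3) unfolding indep_def by simp
    then have "card (proj C (insert j I)) = card (proj C I)"
      using card_proj_insert[OF I] by blast
    then show ?thesis using coordinate_determined[OF I _ assms(5-7)] True by simp
  next
    case False
    then show ?thesis using fun_cong[OF assms(7), of j] by auto
  qed
qed

lemma exists_maximal_indep:
  assumes "I\<^sub>0 \<subseteq> Z" "Z \<subseteq> {1..n}" "indep I\<^sub>0"
  obtains I where "I\<^sub>0 \<subseteq> I" "I \<subseteq> Z" "indep I" "\<forall>j \<in> Z - I. \<not> indep (insert j I)"
proof -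
  define F where "F = {I. I\<^sub>0 \<subseteq> I \<and> I \<subseteq> Z \<and> indep I}"
  have fZ: "finite Z" using finite_subset[OF assms(2)] by simp
  then have fF: "finite F" by (rule finite_subset[rotated, OF finite_Pow_iff[THEN iffD2]]) (auto simp: F_def)
  have "I\<^sub>0 \<in> F" using assms by (simp add: F_def)
  have "Max (card ` F) \<in> card ` F" using fF \<open>I\<^sub>0 \<in> F\<close> by (intro Max_in) auto
  then obtain I where I: "I \<in> F" "card I = Max (card ` F)" by auto
  have mx: "card I' \<le> card I" if "I' \<in> F" for I' using fF that by (simp add: I(2))
  have "\<not> indep (insert j I)" if j: "j \<in> Z - I" for j
  proof
    assume "indep (insert j I)"
    then have "insert j I \<in> F" using I j by (auto simp: F_def)
    then have "card (insert j I) \<le> card I" by (rule mx)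
    moreover have "finite I" using I fZ finite_subset by (auto simp: F_def)
    ultimately show False using j by simp
  qed
  then show ?thesis using that I by (auto simp: F_def)
qed

lemma proj_indep_eq_PiE:
  assumes "J \<subseteq> {1..n}" "indep J"
  shows "proj C J = PiE J (\<lambda>_. A)"
proof (rule card_subset_eq)
  show "finite (PiE J (\<lambda>_. A))"
    using finite_alphabet finite_subset[OF assms(1)] by (simp add: finite_PiE)
  show "proj C J \<subseteq> PiE J (\<lambda>_. A)" using proj_subset_PiE[OF code_subset assms(1)] .
  show "card (proj C J) = card (PiE J (\<lambda>_. A))"
    using assms(2) finite_subset[OF assms(1)] by (simp add: indep_def card_PiE)
qed

lemma indep_empty: "indep {}"
proof -
  have "C \<noteq> {}" using card_code card_alphabet by auto
  then have "proj C {} = {\<lambda>_. undefined}" by (auto simp: proj_def restrict_def)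
  then show ?thesis by (simp add: indep_def)
qed

lemma aa_rank_eq_card_determining:
  assumes "J \<subseteq> Y" "indep J"
    and det: "\<forall>c \<in> C. \<forall>c' \<in> C. restrict c J = restrict c' J \<longrightarrow> restrict c Y = restrict c' Y"
  shows "inj_on (\<lambda>y. restrict y J) (proj C Y)" and "aa_rank A C Y = card J"
proof -
  have YJ: "Y \<inter> J = J" using assms(1) by blast
  show inj: "inj_on (\<lambda>y. restrict y J) (proj C Y)"
  proof (rule inj_onI)
    fix y y' assume "y \<in> proj C Y" "y' \<in> proj C Y" and e: "restrict y J = restrict y' J"
    then obtain c c' where c: "c \<in> C" "c' \<in> C" "y = restrict c Y" "y' = restrict c' Y"
      by (auto simp: proj_def)
    then have "restrict c J = restrict c' J" using e YJ by simp
    then show "y = y'" using det c by blast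
  qed
  have "card (proj C Y) = card (proj C J)"
    using card_image[OF inj] proj_restrict_image[OF assms(1), of C] by simp
  then show "aa_rank A C Y = card J" using assms(2) by (intro aa_rank_eqI) (simp add: indep_def)
qed

text \<open>
  Choose a maximal independent \<open>I \<subseteq> Z\<close> and extend it to a maximal independent
  \<open>J \<subseteq> Y\<close>.  Restriction to \<open>J\<close> is a bijection from \<open>C\<^sub>Y\<close> onto \<open>A\<^sup>J\<close> carrying the fiber
  over \<open>z\<close> onto the words extending \<open>z\<^sub>I\<close>.
\<close>
lemma card_proj_fiber:
  assumes "Z \<subseteq> Y" "Y \<subseteq> {1..n}" "z \<in> proj C Z"
  shows "card {y \<in> proj C Y. restrict y Z = z} = card A ^ (aa_rank A C Y - aa_rank A C Z)"
proof -
  have Zn: "Z \<subseteq> {1..n}" using assms by auto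
  obtain I where I: "I \<subseteq> Z" "indep I" "\<forall>j \<in> Z - I. \<not> indep (insert j I)"
    using exists_maximal_indep[OF empty_subsetI Zn indep_empty] by metis
  have "I \<subseteq> Y" using I(1) assms(1) by blast
  then obtain J where J: "I \<subseteq> J" "J \<subseteq> Y" "indep J" "\<forall>j \<in> Y - J. \<not> indep (insert j J)"
    using exists_maximal_indep[OF _ assms(2) I(2)] by metis
  have detZ: "\<forall>c \<in> C. \<forall>c' \<in> C. restrict c I = restrict c' I \<longrightarrow> restrict c Z = restrict c' Z"
    using maximal_indep_determines[OF I(1) Zn I(2,3)] by blast
  have detY: "\<forall>c \<in> C. \<forall>c' \<in> C. restrict c J = restrict c' J \<longrightarrow> restrict c Y = restrict c' Y"
    using maximal_indep_determines[OF J(2) assms(2) J(3,4)] by blast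
  note rY = aa_rank_eq_card_determining[OF J(2,3) detY]
  note rZ = aa_rank_eq_card_determining[OF I(1,2) detZ]
  have Jn: "J \<subseteq> {1..n}" using J assms by auto
  have full: "proj C J = PiE J (\<lambda>_. A)" using proj_indep_eq_PiE[OF Jn J(3)] .
  define F where "F = {y \<in> proj C Y. restrict y Z = z}"
  define G where "G = {v \<in> PiE J (\<lambda>_. A). restrict v I \<in> {restrict z I}}"
  have "(\<lambda>y. restrict y J) ` F = G"
  proof (intro equalityI subsetI)
    fix v assume "v \<in> (\<lambda>y. restrict y J) ` F"
    then obtain y where y: "y \<in> proj C Y" "restrict y Z = z" "v = restrict y J"
      by (auto simp: F_def)
    have "v \<in> proj C J" using y proj_restrict_image[OF J(2)] by auto
    moreover have "restrict v I = restrict z I"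
      using y I(1) J(1) by (auto simp: fun_eq_iff) (metis subsetD)
    ultimately show "v \<in> G" using full by (simp add: G_def)
  next
    fix v assume v: "v \<in> G"
    then have "v \<in> proj C J" using full by (simp add: G_def)
    then obtain c where c: "c \<in> C" "v = restrict c J" by (auto simp: proj_def)
    obtain c' where c': "c' \<in> C" "z = restrict c' Z" using assms(3) by (auto simp: proj_def)
    have "restrict c I = restrict c' I" using v c c' I(1) J(1)
      by (auto simp: G_def fun_eq_iff restrict_def split: if_splits)
    then have "restrict c Z = z" using detZ c c' by blast
    moreover have "Y \<inter> Z = Z" "Y \<inter> J = J" using assms(1) J(2) by blast+
    ultimately have "restrict c Y \<in> F" "v = restrict (restrict c Y) J"
      using c by (auto simp: F_def proj_def)
    then show "v \<in> (\<lambda>y. restrict y J) ` F" by blast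
  qed
  moreover have "inj_on (\<lambda>y. restrict y J) F"
    using rY(1) by (rule inj_on_subset) (auto simp: F_def)
  ultimately have "card F = card G" using card_image by fastforce
  also have "card G = card A ^ card (J - I)"
    using proj_subset_PiE[OF code_subset Zn] assms(3) I(1) J(1) finite_subset[OF Jn]
    unfolding G_def by (subst card_PiE_restrict_in) (auto simp: PiE_iff)
  also have "card (J - I) = card J - card I"
    using J(1) finite_subset[OF Jn] by (simp add: card_Diff_subset finite_subset)
  finally show ?thesis unfolding F_def rY(2) rZ(2) .
qed

lemma card_basis:
  assumes "mat_basis A n C B"
  shows "card B = k"
proof -
  have Bn: "B \<subseteq> {1..n}" and "mat_indep A C B"
    and maximal: "\<forall>B'. B \<subseteq> B' \<and> B' \<subseteq> {1..n} \<and> mat_indep A C B' \<longrightarrow> B' = B"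
    using assms unfolding mat_basis_def by blast+
  then have iB: "indep B" using mat_indep_iff_indep by blast
  have "\<forall>j \<in> {1..n} - B. \<not> indep (insert j B)"
    using maximal Bn mat_indep_iff_indep[of "insert _ B"] by blast
  then have det: "restrict c {1..n} = restrict c' {1..n}"
    if "c \<in> C" "c' \<in> C" "restrict c B = restrict c' B" for c c'
    using maximal_indep_determines[OF Bn order_refl iB] that by blast
  have "restrict c {1..n} = c" if "c \<in> C" for c
    using that code_subset by (metis PiE_iff extensional_restrict subsetD)
  then have "inj_on (\<lambda>c. restrict c B) C"
    using det by (intro inj_onI) metis
  then have "card C = card (proj C B)" unfolding proj_def by (simp add: card_image)
  then have "card A ^ k = card A ^ card B" using iB card_code by (simp add: indep_def)
  then show ?thesis by (auto dest: power_alphabet_inject)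
qed

end

locale latin_operation =
  fixes A :: "'a set" and \<phi> :: "'a \<Rightarrow> 'a \<Rightarrow> 'a"
  assumes latin: "\<forall>y \<in> A. bij_betw (\<phi> y) A A \<and> bij_betw (\<lambda>x. \<phi> x y) A A"
begin

definition ldiv :: "'a \<Rightarrow> 'a \<Rightarrow> 'a" where
  "ldiv a s = inv_into A (\<phi> a) s"

lemma phi_closed: "a \<in> A \<Longrightarrow> b \<in> A \<Longrightarrow> \<phi> a b \<in> A"
  using latin bij_betwE by blast

lemma phi_right_cancel: "b \<in> A \<Longrightarrow> x \<in> A \<Longrightarrow> y \<in> A \<Longrightarrow> \<phi> x b = \<phi> y b \<longleftrightarrow> x = y"
  using latin by (metis (no_types, lifting) bij_betw_imp_inj_on inj_on_contraD)

lemma ldiv_closed: "a \<in> A \<Longrightarrow> s \<in> A \<Longrightarrow> ldiv a s \<in> A"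
  unfolding ldiv_def using latin by (metis bij_betw_imp_surj_on inv_into_into)

lemma phi_ldiv: "a \<in> A \<Longrightarrow> s \<in> A \<Longrightarrow> \<phi> a (ldiv a s) = s"
  unfolding ldiv_def using latin by (metis bij_betw_imp_surj_on f_inv_into_f)

lemma ldiv_eq_iff: "a \<in> A \<Longrightarrow> s \<in> A \<Longrightarrow> m \<in> A \<Longrightarrow> m = ldiv a s \<longleftrightarrow> \<phi> a m = s"
  unfolding ldiv_def using latin by (metis bij_betw_imp_inj_on bij_betw_imp_surj_on f_inv_into_f inv_into_f_f)

lemma ldiv_inj: "a \<in> A \<Longrightarrow> b \<in> A \<Longrightarrow> s \<in> A \<Longrightarrow> ldiv a s = ldiv b s \<Longrightarrow> a = b"
  by (metis ldiv_closed phi_ldiv phi_right_cancel)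

end

locale latin_code = almost_affine_code A n k C + latin_operation A \<phi>
  for A :: "'a set" and n k :: nat and C :: "(nat \<Rightarrow> 'a) set" and \<phi> :: "'a \<Rightarrow> 'a \<Rightarrow> 'a"
begin

lemma proj_Cm_eq_image:
  "proj (Cm \<phi> n B C m) Z = (\<lambda>z. restrict (Phi \<phi> n B m z) Z) ` proj C Z"
  unfolding proj_def Cm_def image_image by (intro image_cong refl restrict_Phi_cong) auto

lemma card_proj_Cm:
  assumes "Z \<subseteq> {1..n}" "\<forall>i \<in> Z - B. m i \<in> A"
  shows "card (proj (Cm \<phi> n B C m) Z) = card (proj C Z)"
proof -
  have "inj_on (\<lambda>z. restrict (Phi \<phi> n B m z) Z) (proj C Z)"
  proof (rule inj_onI)
    fix z z' assume z: "z \<in> proj C Z" "z' \<in> proj C Z"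
      and e: "restrict (Phi \<phi> n B m z) Z = restrict (Phi \<phi> n B m z') Z"
    have P: "z \<in> PiE Z (\<lambda>_. A)" "z' \<in> PiE Z (\<lambda>_. A)"
      using z proj_subset_PiE[OF code_subset assms(1)] by auto
    show "z = z'"
    proof
      fix i
      show "z i = z' i"
      proof (cases "i \<in> Z")
        case True
        then have A: "z i \<in> A" "z' i \<in> A" "i \<notin> B \<Longrightarrow> m i \<in> A" using assms(2) P by auto
        have eq: "(if i \<in> B then z i else \<phi> (z i) (m i)) = (if i \<in> B then z' i else \<phi> (z' i) (m i))"
          using fun_cong[OF e, of i] True assms(1) by (auto simp: Phi_apply)
        show ?thesis
        proof (cases "i \<in> B")
          case True
          then show ?thesis using eq by simp
        next
          case False
          then have "\<phi> (z i) (m i) = \<phi> (z' i) (m i)" using eq by simp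
          then show ?thesis using phi_right_cancel[OF A(3)[OF False] A(1,2)] by simp
        qed
      next
        case False
        then show ?thesis using PiE_arb[OF P(1)] PiE_arb[OF P(2)] by simp
      qed
    qed
  qed
  then show ?thesis by (simp add: proj_Cm_eq_image card_image)
qed

lemma proj_Cm_subset_PiE:
  assumes "Z \<subseteq> {1..n}" "\<forall>i \<in> Z - B. m i \<in> A"
  shows "proj (Cm \<phi> n B C m) Z \<subseteq> PiE Z (\<lambda>_. A)"
proof
  fix y assume "y \<in> proj (Cm \<phi> n B C m) Z"
  then obtain z where "z \<in> PiE Z (\<lambda>_. A)" "y = restrict (Phi \<phi> n B m z) Z"
    using proj_subset_PiE[OF code_subset assms(1)] by (auto simp: proj_Cm_eq_image)
  then show "y \<in> PiE Z (\<lambda>_. A)"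
    using assms by (auto simp: PiE_iff Phi_apply[OF subsetD[OF assms(1)]] phi_closed)
qed

lemma proj_Dcode:
  assumes X: "X \<subseteq> {1..n} - B" and M: "M \<in> PiE X (\<lambda>_. A)" and Y: "Y \<subseteq> {1..n}"
  defines "Z \<equiv> Y \<inter> (B \<union> X)"
  shows "proj (Dcode A \<phi> n B C X M) Y
    = {y \<in> PiE Y (\<lambda>_. A). restrict y Z \<in> proj (Cm \<phi> n B C M) Z}"
proof (intro equalityI subsetI)
  fix y assume "y \<in> proj (Dcode A \<phi> n B C X M) Y"
  then obtain m c where m: "m \<in> PiE ({1..n} - B) (\<lambda>_. A)" "restrict m X = M" and c: "c \<in> C"
    and y: "y = restrict (Phi \<phi> n B m c) Y"
    by (auto simp: proj_def Dcode_def Cm_def)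
  have "y \<in> PiE Y (\<lambda>_. A)"
    using y Y m c by (auto simp: Phi_apply PiE_iff code_val_in phi_closed)
  moreover have "restrict y Z = restrict (Phi \<phi> n B M c) Z"
  proof -
    have "Y \<inter> Z = Z" by (auto simp: Z_def)
    moreover have "\<forall>i \<in> Z - B. m i = M i" using m(2) by (auto simp: Z_def dest: fun_cong)
    ultimately show ?thesis using y by (simp add: restrict_Phi_cong)
  qed
  ultimately show "y \<in> {y \<in> PiE Y (\<lambda>_. A). restrict y Z \<in> proj (Cm \<phi> n B C M) Z}"
    using c by (auto simp: proj_def Cm_def)
next
  fix y assume "y \<in> {y \<in> PiE Y (\<lambda>_. A). restrict y Z \<in> proj (Cm \<phi> n B C M) Z}"
  then obtain c where y: "y \<in> PiE Y (\<lambda>_. A)" and c: "c \<in> C"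
    and yZ: "restrict y Z = restrict (Phi \<phi> n B M c) Z"
    by (auto simp: proj_def Cm_def)
  obtain a where a: "a \<in> A" using alphabet_nonempty by blast
  define m where "m = restrict (\<lambda>i. if i \<in> X then M i else if i \<in> Y then ldiv (c i) (y i) else a)
    ({1..n} - B)"
  have "m \<in> PiE ({1..n} - B) (\<lambda>_. A)"
    using M y a c by (auto simp: m_def PiE_iff code_val_in ldiv_closed)
  moreover have "restrict m X = M"
  proof
    fix i
    show "restrict m X i = M i" using X PiE_arb[OF M, of i] by (cases "i \<in> X") (auto simp: m_def)
  qed
  ultimately have "Phi \<phi> n B m c \<in> Dcode A \<phi> n B C X M"
    using c unfolding Dcode_def Cm_def by blast
  moreover have "restrict (Phi \<phi> n B m c) Y = y"
  proof
    fix i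
    show "restrict (Phi \<phi> n B m c) Y i = y i"
    proof (cases "i \<in> Y")
      case True
      then have iE: "i \<in> {1..n}" using Y by auto
      show ?thesis
      proof (cases "i \<in> Z")
        case True
        then show ?thesis
          using fun_cong[OF yZ, of i] X iE by (auto simp: Z_def Phi_apply m_def)
      next
        case False
        then show ?thesis using \<open>i \<in> Y\<close> iE y c
          by (auto simp: Z_def Phi_apply m_def PiE_iff phi_ldiv code_val_in)
      qed
    next
      case False
      then show ?thesis using PiE_arb[OF y] by simp
    qed
  qed
  ultimately show "y \<in> proj (Dcode A \<phi> n B C X M) Y"
    unfolding proj_def by blast
qed

lemma aa_rank_Dcode:
  assumes X: "X \<subseteq> {1..n} - B" and M: "M \<in> PiE X (\<lambda>_. A)" and Y: "Y \<subseteq> {1..n}"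
  shows "aa_rank A (Dcode A \<phi> n B C X M) Y = card (Y - (B \<union> X)) + aa_rank A C (Y \<inter> (B \<union> X))"
proof -
  let ?Z = "Y \<inter> (B \<union> X)"
  have Z: "?Z \<subseteq> {1..n}" "\<forall>i \<in> ?Z - B. M i \<in> A" using Y M by auto
  have "card (proj (Dcode A \<phi> n B C X M) Y) = card (proj (Cm \<phi> n B C M) ?Z) * card A ^ card (Y - ?Z)"
    unfolding proj_Dcode[OF assms]
    using finite_subset[OF Y] proj_Cm_subset_PiE[OF Z] by (intro card_PiE_restrict_in) auto
  also have "\<dots> = card A ^ (card (Y - (B \<union> X)) + aa_rank A C ?Z)"
    using card_proj_Cm[OF Z] card_proj_eq_power_rank[OF Z(1)]
    by (simp add: Diff_Int power_add)
  finally show ?thesis by (rule aa_rank_eqI)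
qed

end

locale message_count = latin_code A n k C \<phi>
  for A :: "'a set" and n k :: nat and C :: "(nat \<Rightarrow> 'a) set" and \<phi> :: "'a \<Rightarrow> 'a \<Rightarrow> 'a" +
  fixes B X Y :: "nat set" and M m\<^sub>0 c\<^sub>0 :: "nat \<Rightarrow> 'a"
  assumes B_sub: "B \<subseteq> {1..n}" and X_sub: "X \<subseteq> {1..n} - B" and Y_sub: "Y \<subseteq> {1..n}"
    and M_in: "M \<in> PiE X (\<lambda>_. A)"
    and m\<^sub>0_in: "m\<^sub>0 \<in> PiE ({1..n} - B) (\<lambda>_. A)" and m\<^sub>0_X: "restrict m\<^sub>0 X = M"
    and c\<^sub>0_in: "c\<^sub>0 \<in> C"
begin

abbreviation target :: "nat \<Rightarrow> 'a" where
  "target \<equiv> restrict (Phi \<phi> n B m\<^sub>0 c\<^sub>0) Y"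

definition fiber :: "(nat \<Rightarrow> 'a) set" where
  "fiber = {y \<in> proj C Y. restrict y (Y \<inter> (B \<union> X)) = restrict c\<^sub>0 (Y \<inter> (B \<union> X))}"

definition message_of :: "(nat \<Rightarrow> 'a) \<Rightarrow> nat \<Rightarrow> 'a" where
  "message_of y = restrict (\<lambda>i. if i \<in> X then M i else ldiv (y i) (target i)) (X \<union> (Y - B))"

lemma target_in: "i \<in> Y \<Longrightarrow> target i \<in> A"
  using Y_sub m\<^sub>0_in c\<^sub>0_in by (auto simp: Phi_apply PiE_iff code_val_in phi_closed)

lemma restrict_Phi_eq_target_iff:
  assumes c: "c \<in> C" and m: "m \<in> PiE ({1..n} - B) (\<lambda>_. A)" and mX: "restrict m X = M"
  shows "restrict (Phi \<phi> n B m c) Y = target \<longleftrightarrow>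
    restrict c (Y \<inter> (B \<union> X)) = restrict c\<^sub>0 (Y \<inter> (B \<union> X))
    \<and> (\<forall>i \<in> Y - (B \<union> X). m i = ldiv (c i) (target i))"
proof -
  have pointwise: "Phi \<phi> n B m c i = target i
    \<longleftrightarrow> (if i \<in> B \<union> X then c i = c\<^sub>0 i else m i = ldiv (c i) (target i))"
    if i: "i \<in> Y" for i
  proof -
    have iE: "i \<in> {1..n}" using i Y_sub by auto
    then have A: "c i \<in> A" "c\<^sub>0 i \<in> A" "target i \<in> A"
      using c c\<^sub>0_in target_in[OF i] by (auto simp: code_val_in)
    consider "i \<in> B" | "i \<in> X" | "i \<notin> B \<union> X" by blast
    then show ?thesis
    proof cases
      case 1
      then show ?thesis using i iE by (simp add: Phi_apply)
    next
      case 2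
      then have "i \<notin> B" "m i = M i" "m\<^sub>0 i = M i" "M i \<in> A"
        using X_sub mX m\<^sub>0_X M_in by (auto dest: fun_cong[of _ _ i])
      then show ?thesis using i iE A 2 by (simp add: Phi_apply phi_right_cancel)
    next
      case 3
      then have "m i \<in> A" using m iE by auto
      then show ?thesis using i iE A 3 by (simp add: Phi_apply ldiv_eq_iff)
    qed
  qed
  have "restrict (Phi \<phi> n B m c) Y = target \<longleftrightarrow> (\<forall>i \<in> Y. Phi \<phi> n B m c i = target i)"
    by (auto simp: fun_eq_iff)
  also have "\<dots> \<longleftrightarrow> restrict c (Y \<inter> (B \<union> X)) = restrict c\<^sub>0 (Y \<inter> (B \<union> X))
    \<and> (\<forall>i \<in> Y - (B \<union> X). m i = ldiv (c i) (target i))"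
    using pointwise by (auto simp: fun_eq_iff)
  finally show ?thesis .
qed

lemma Omega_nonempty_iff:
  assumes m: "m \<in> PiE ({1..n} - B) (\<lambda>_. A)"
  shows "Omega \<phi> n B C target Y X M m \<noteq> {} \<longleftrightarrow> restrict m (X \<union> (Y - B)) \<in> message_of ` fiber"
proof
  assume "Omega \<phi> n B C target Y X M m \<noteq> {}"
  then obtain c where mX: "restrict m X = M" and c: "c \<in> C"
    and "restrict (Phi \<phi> n B m c) Y = target"
    by (auto simp: Omega_def Cm_def split: if_splits)
  then have cZ: "restrict c (Y \<inter> (B \<union> X)) = restrict c\<^sub>0 (Y \<inter> (B \<union> X))"
    and mY: "\<forall>i \<in> Y - (B \<union> X). m i = ldiv (c i) (target i)"
    using restrict_Phi_eq_target_iff[OF c m mX] by auto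
  have "restrict c Y \<in> fiber"
    using c cZ by (auto simp: fiber_def proj_def Int_absorb1)
  moreover have "restrict m (X \<union> (Y - B)) = message_of (restrict c Y)"
  proof
    fix i
    show "restrict m (X \<union> (Y - B)) i = message_of (restrict c Y) i"
      using fun_cong[OF mX, of i] mY by (cases "i \<in> X") (auto simp: message_of_def)
  qed
  ultimately show "restrict m (X \<union> (Y - B)) \<in> message_of ` fiber" by blast
next
  assume "restrict m (X \<union> (Y - B)) \<in> message_of ` fiber"
  then obtain c where c: "c \<in> C" and cZ: "restrict c (Y \<inter> (B \<union> X)) = restrict c\<^sub>0 (Y \<inter> (B \<union> X))"
    and e: "restrict m (X \<union> (Y - B)) = message_of (restrict c Y)"
    by (auto simp: fiber_def proj_def Int_absorb1)
  have "restrict m X = M"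
  proof
    fix i
    show "restrict m X i = M i"
      using fun_cong[OF e, of i] PiE_arb[OF M_in, of i] by (cases "i \<in> X") (auto simp: message_of_def)
  qed
  moreover have "\<forall>i \<in> Y - (B \<union> X). m i = ldiv (c i) (target i)"
  proof
    fix i assume "i \<in> Y - (B \<union> X)"
    then show "m i = ldiv (c i) (target i)" using fun_cong[OF e, of i] by (simp add: message_of_def)
  qed
  ultimately show "Omega \<phi> n B C target Y X M m \<noteq> {}"
    using restrict_Phi_eq_target_iff[OF c m] c cZ by (auto simp: Omega_def Cm_def)
qed

lemma inj_on_message_of: "inj_on message_of fiber"
proof (rule inj_onI)
  fix y y' assume y: "y \<in> fiber" "y' \<in> fiber" and e: "message_of y = message_of y'"
  have P: "y \<in> PiE Y (\<lambda>_. A)" "y' \<in> PiE Y (\<lambda>_. A)"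
    using y proj_subset_PiE[OF code_subset Y_sub] by (auto simp: fiber_def)
  show "y = y'"
  proof
    fix i
    consider "i \<in> Y \<inter> (B \<union> X)" | "i \<in> Y - (B \<union> X)" | "i \<notin> Y" by blast
    then show "y i = y' i"
    proof cases
      case 1
      then show ?thesis using y by (auto simp: fiber_def dest!: fun_cong[of _ _ i])
    next
      case 2
      then have "ldiv (y i) (target i) = ldiv (y' i) (target i)"
        using fun_cong[OF e, of i] by (simp add: message_of_def)
      moreover have "y i \<in> A" "y' i \<in> A" "target i \<in> A" using 2 P target_in by auto
      ultimately show ?thesis by (blast intro: ldiv_inj)
    next
      case 3
      then show ?thesis using PiE_arb[OF P(1)] PiE_arb[OF P(2)] by simp
    qed
  qed
qed

lemma message_of_fiber_subset: "message_of ` fiber \<subseteq> PiE (X \<union> (Y - B)) (\<lambda>_. A)"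
  using M_in proj_subset_PiE[OF code_subset Y_sub] target_in
  by (fastforce simp: message_of_def fiber_def PiE_iff ldiv_closed)

lemma card_Omega_nonempty:
  "card {m \<in> PiE ({1..n} - B) (\<lambda>_. A). Omega \<phi> n B C target Y X M m \<noteq> {}}
    = card A ^ (aa_rank A C Y - aa_rank A C (Y \<inter> (B \<union> X)))
      * card A ^ card ({1..n} - B - (X \<union> (Y - B)))"
proof -
  have "{m \<in> PiE ({1..n} - B) (\<lambda>_. A). Omega \<phi> n B C target Y X M m \<noteq> {}}
    = {m \<in> PiE ({1..n} - B) (\<lambda>_. A). restrict m (X \<union> (Y - B)) \<in> message_of ` fiber}"
    using Omega_nonempty_iff by blast
  also have "card \<dots> = card (message_of ` fiber) * card A ^ card ({1..n} - B - (X \<union> (Y - B)))"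
    using X_sub Y_sub message_of_fiber_subset by (intro card_PiE_restrict_in) auto
  also have "card (message_of ` fiber) = card fiber"
    by (rule card_image[OF inj_on_message_of])
  also have "\<dots> = card A ^ (aa_rank A C Y - aa_rank A C (Y \<inter> (B \<union> X)))"
    unfolding fiber_def using Y_sub c\<^sub>0_in by (intro card_proj_fiber) (auto simp: proj_def)
  finally show ?thesis .
qed

lemma card_Omega_nonempty_eq_power:
  "card {m \<in> PiE ({1..n} - B) (\<lambda>_. A). Omega \<phi> n B C target Y X M m \<noteq> {}}
    = card A ^ (n - card B - card X - rho A \<phi> n B C X M Y)"
proof -
  let ?Z = "Y \<inter> (B \<union> X)" and ?Y' = "Y - (B \<union> X)"
  have rho: "rho A \<phi> n B C X M Y = card ?Y' + aa_rank A C ?Z - aa_rank A C Y"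
    unfolding rho_def using aa_rank_Dcode[OF X_sub M_in Y_sub] by simp
  have "aa_rank A C ?Z \<le> aa_rank A C Y" "aa_rank A C Y \<le> aa_rank A C ?Z + card ?Y'"
    using aa_rank_mono[OF _ Y_sub] aa_rank_le_add_card[OF _ Y_sub, of ?Z] by (auto simp: Diff_Int)
  moreover have "X \<union> (Y - B) = X \<union> ?Y'" "X \<inter> ?Y' = {}" "X \<union> ?Y' \<subseteq> {1..n} - B"
    using X_sub Y_sub by auto
  then have "card ({1..n} - B - (X \<union> (Y - B))) = n - card B - (card X + card ?Y')"
    "card X + card ?Y' \<le> n - card B"
    using B_sub finite_subset[OF B_sub] card_mono[of "{1..n} - B" "X \<union> ?Y'"]
    by (auto simp: card_Diff_subset card_Un_disjoint finite_subset)
  ultimately have "aa_rank A C Y - aa_rank A C ?Z + card ({1..n} - B - (X \<union> (Y - B)))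
      = n - card B - card X - rho A \<phi> n B C X M Y"
    unfolding rho by linarith
  then show ?thesis
    unfolding card_Omega_nonempty power_add[symmetric] by simp
qed

end

theorem mainTheorem9:
  fixes A :: "'a set" and n k :: nat and C :: "(nat \<Rightarrow> 'a) set"
    and B X Y :: "nat set" and \<phi> :: "'a \<Rightarrow> 'a \<Rightarrow> 'a"
    and M w :: "nat \<Rightarrow> 'a"
  assumes "finite A" and "card A \<ge> 2"
    and "almost_affine A n k C"
    and "mat_basis A n C B"
    and "\<forall>y\<in>A. bij_betw (\<phi> y) A A \<and> bij_betw (\<lambda>x. \<phi> x y) A A"
    and "X \<subseteq> {1..n} - B"
    and "M \<in> PiE X (\<lambda>_. A)"
    and "w \<in> Dcode A \<phi> n B C X M"
    and "Y \<subseteq> {1..n}"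
  shows "card {m \<in> PiE ({1..n} - B) (\<lambda>_. A).
                 Omega \<phi> n B C (restrict w Y) Y X M m \<noteq> {}}
         = card A ^ (n - k - card X - rho A \<phi> n B C X M Y)"
proof -
  interpret latin_code A n k C \<phi>
    using assms(1-3,5) by unfold_locales
  obtain m\<^sub>0 c\<^sub>0 where m\<^sub>0: "m\<^sub>0 \<in> PiE ({1..n} - B) (\<lambda>_. A)" "restrict m\<^sub>0 X = M"
    and c\<^sub>0: "c\<^sub>0 \<in> C" and w: "w = Phi \<phi> n B m\<^sub>0 c\<^sub>0"
    using assms(8) unfolding Dcode_def Cm_def by blast
  have "B \<subseteq> {1..n}" using assms(4) by (simp add: mat_basis_def)
  then interpret message_count A n k C \<phi> B X Y M m\<^sub>0 c\<^sub>0
    using assms(6,7,9) m\<^sub>0 c\<^sub>0 by unfold_locales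
  show ?thesis
    using card_Omega_nonempty_eq_power card_basis[OF assms(4)] by (simp add: w)
qed

end
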